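(* Let $X=(x_1,\dots,x_k)$ be a composition of a positive integer $n$, and let $\ell\ge2$. The set of Dyck words of semilength $n$ with free composition $X$ and exactly $\ell$ hits is in bijection with the set of Motzkin paths of length $k-1$ having exactly $\ell-2$ flat steps at height zero.
   Context: A Dyck word of semilength $n$ is a word with $n$ zeros and $n$ ones in which every prefix has at least as many zeros as ones; it has a hit at position $2j$ ($0\le j\le n$) if its prefix of length $2j$ has exactly $j$ zeros and $j$ ones (positions $0$ and $2n$ included). Indices $i,i+1$ are linked if the $i$-th and $(i+1)$-st $0$ occupy adjacent positions and the $i$-th and $(i+1)$-st $1$ occupy adjacent positions; free blocks are maximal intervals of $\{1,\dots,n\}$ of linked consecutive indices, and the free composition lists their sizes from left to right. A Motzkin path of length $k$ is a lattice path from $(0,0)$ to $(k,0)$ with steps $(1,1)$, $(1,-1)$, $(1,0)$ (flat steps) never going below the $x$-axis; a flat step is at height zero if it lies on the $x$-axis. *)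

theory Defs
  imports Main
begin

text \<open>Words are lists over the letters 0 and 1 (type nat); positions are 1-based.\<close>

definition cnt :: "nat \<Rightarrow> nat list \<Rightarrow> nat" where
  "cnt a w = length (filter (\<lambda>x. x = a) w)"

definition dyck :: "nat \<Rightarrow> nat list \<Rightarrow> bool" where
  "dyck n w \<longleftrightarrow> set w \<subseteq> {0, 1} \<and> cnt 0 w = n \<and> cnt 1 w = n \<and>
     (\<forall>i \<le> length w. cnt 1 (take i w) \<le> cnt 0 (take i w))"

definition hits :: "nat \<Rightarrow> nat list \<Rightarrow> nat" where
  "hits n w = card {j. j \<le> n \<and> cnt 0 (take (2*j) w) = j \<and> cnt 1 (take (2*j) w) = j}"

text \<open>Position (1-based) of the i-th occurrence (i >= 1) of letter a in w.\<close>
definition pos :: "nat \<Rightarrow> nat list \<Rightarrow> nat \<Rightarrow> nat" where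
  "pos a w i = filter (\<lambda>p. w ! (p - 1) = a) [1..<length w + 1] ! (i - 1)"

definition linked :: "nat list \<Rightarrow> nat \<Rightarrow> bool" where
  "linked w i \<longleftrightarrow> pos 0 w (i+1) = pos 0 w i + 1 \<and> pos 1 w (i+1) = pos 1 w i + 1"

definition diffs :: "nat list \<Rightarrow> nat list" where
  "diffs xs = map (\<lambda>(a, b). b - a) (zip xs (tl xs))"

text \<open>Free composition of a Dyck word of semilength n: sizes of the maximal blocks of
  {1..n} of consecutively linked indices, left to right.\<close>
definition free_comp :: "nat \<Rightarrow> nat list \<Rightarrow> nat list" where
  "free_comp n w = diffs (0 # filter (\<lambda>i. \<not> linked w i) [1..<n] @ [n])"

definition motzkin :: "nat \<Rightarrow> int list \<Rightarrow> bool" where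
  "motzkin m p \<longleftrightarrow> length p = m \<and> set p \<subseteq> {1, -1, 0} \<and> sum_list p = 0 \<and>
     (\<forall>i \<le> m. sum_list (take i p) \<ge> 0)"

definition flat0 :: "int list \<Rightarrow> nat" where
  "flat0 p = card {i. i < length p \<and> p ! i = 0 \<and> sum_list (take i p) = 0}"

definition is_composition :: "nat list \<Rightarrow> nat \<Rightarrow> bool" where
  "is_composition X n \<longleftrightarrow> (\<forall>x\<in>set X. 0 < x) \<and> sum_list X = n"

end

theory Submission
  imports Defs
begin

(*
  A Dyck word of semilength n > 0 is a product of runs 0^a1 1^b1 ... 0^ak 1^bk with all
  ai, bi > 0. It is determined by the set A of proper partial sums of the ai (the indices i < n
  whose i-th zero ends a run) and the set B of proper partial sums of the bi, and the pairs
  (A, B) that occur are exactly those of subsets of {1..n-1} of equal size whose m-th elements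
  satisfy B_m <= A_m (the ballot condition). Indices i, i+1 are unlinked exactly when
  i lies in A or B, so the free composition is X iff A and B together cover the proper partial
  sums C of X. The hits other than 0 and n are the common elements of A and B of equal rank.
  Scanning C upwards with an up step at elements of B only, a down step at elements of A only
  and a flat step at common elements turns (A, B) into a Motzkin path of length |C| = k - 1;
  the ballot condition keeps it nonnegative, and its flat steps at height zero are exactly the
  common elements of equal rank.
*)

section \<open>Counting and locating letters\<close>

lemma cnt_Nil [simp]: "cnt a [] = 0"
  by (simp add: cnt_def)

lemma cnt_Cons [simp]: "cnt a (x # w) = (if x = a then 1 else 0) + cnt a w"
  by (simp add: cnt_def)

lemma cnt_append [simp]: "cnt a (u @ v) = cnt a u + cnt a v"
  by (simp add: cnt_def)

lemma cnt_replicate [simp]: "cnt a (replicate m x) = (if x = a then m else 0)"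
  by (induction m) auto

lemma cnt_0_add_cnt_1: "set w \<subseteq> {0, 1} \<Longrightarrow> cnt 0 w + cnt 1 w = length w"
  by (induction w) auto

definition occurrences :: "nat \<Rightarrow> nat list \<Rightarrow> nat list" where
  "occurrences a w = filter (\<lambda>i. w ! i = a) [0..<length w]"

lemma length_occurrences: "length (occurrences a w) = cnt a w"
proof -
  have "map (\<lambda>i. w ! i) [0..<length w] = w"
    by (rule nth_equalityI) auto
  then have "cnt a w = length (filter (\<lambda>x. x = a) (map (\<lambda>i. w ! i) [0..<length w]))"
    by (simp add: cnt_def)
  then show ?thesis
    by (simp add: occurrences_def filter_map o_def)
qed

lemma occurrences_append:
  "occurrences a (u @ v) = occurrences a u @ map (\<lambda>i. length u + i) (occurrences a v)"
proof -
  have "[0..<length (u @ v)] = [0..<length u] @ map (\<lambda>i. length u + i) [0..<length v]"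
    by (simp add: upt_add_eq_append[symmetric] map_add_upt add.commute)
  then show ?thesis
    unfolding occurrences_def by (auto simp: filter_map o_def nth_append intro!: filter_cong)
qed

lemma pos_eq_occurrences:
  assumes "0 < i" "i \<le> cnt a w"
  shows "pos a w i = Suc (occurrences a w ! (i - 1))"
proof -
  have "[1..<length w + 1] = map Suc [0..<length w]"
    by (simp add: map_Suc_upt)
  then have "pos a w i = map Suc (occurrences a w) ! (i - 1)"
    by (simp add: pos_def occurrences_def filter_map o_def)
  with assms show ?thesis
    by (simp add: length_occurrences)
qed

lemma pos_gt_0: "0 < i \<Longrightarrow> i \<le> cnt a w \<Longrightarrow> 0 < pos a w i"
  by (simp add: pos_eq_occurrences)

lemma pos_append:
  assumes "0 < i" "i \<le> cnt a u + cnt a v"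
  shows "pos a (u @ v) i =
    (if i \<le> cnt a u then pos a u i else length u + pos a v (i - cnt a u))"
proof (cases "i \<le> cnt a u")
  case True
  then have "i - 1 < cnt a u"
    using assms(1) by linarith
  with assms True show ?thesis
    by (simp add: pos_eq_occurrences occurrences_append nth_append length_occurrences)
next
  case False
  define j where "j = i - cnt a u"
  have j: "0 < j" "j \<le> cnt a v" "\<not> i - 1 < cnt a u" "i - 1 - cnt a u = j - 1"
    using False assms by (auto simp: j_def)
  then have "occurrences a (u @ v) ! (i - 1) = length u + occurrences a v ! (j - 1)"
    by (simp add: occurrences_append nth_append length_occurrences)
  with j False assms show ?thesis
    by (simp add: pos_eq_occurrences j_def)
qed

lemma pos_replicate_append:
  assumes "0 < i" "i \<le> (if x = a then m else 0) + cnt a v"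
  shows "pos a (replicate m x @ v) i =
    (if x = a \<and> i \<le> m then i else m + pos a v (i - (if x = a then m else 0)))"
proof -
  have "pos a (replicate m a) i = i" if "i \<le> m"
  proof -
    have "occurrences a (replicate m a) = [0..<m]"
      by (auto simp: occurrences_def intro: filter_True)
    with assms that show ?thesis
      by (simp add: pos_eq_occurrences)
  qed
  with assms show ?thesis
    using pos_append[of i a "replicate m x" v] by (cases "x = a") auto
qed

section \<open>Partial sums and differences\<close>

fun psums :: "nat list \<Rightarrow> nat list" where
  "psums [] = []"
| "psums (x # xs) = x # map ((+) x) (psums xs)"

lemma length_psums [simp]: "length (psums xs) = length xs"
  by (induction xs) auto

lemma psums_eq_butlast_snoc: "xs \<noteq> [] \<Longrightarrow> psums xs = butlast (psums xs) @ [sum_list xs]"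
proof (induction xs)
  case (Cons x xs)
  then show ?case
    by (cases xs) (auto simp: map_butlast[symmetric])
qed simp

lemma sum_list_eq_if_psums_snoc: "psums xs = L @ [s] \<Longrightarrow> sum_list xs = s"
  using psums_eq_butlast_snoc[of xs] by (cases "xs = []") auto

lemma sorted_wrt_0_psums: "\<forall>x\<in>set xs. 0 < x \<Longrightarrow> sorted_wrt (<) (0 # psums xs)"
  by (induction xs) (auto simp: sorted_wrt_map)

lemma positive_psums_snoc:
  assumes "\<forall>x\<in>set xs. 0 < x" "sum_list xs = n" "0 < n"
  shows "psums xs = butlast (psums xs) @ [n]" "sorted_wrt (<) (0 # butlast (psums xs) @ [n])"
proof -
  have "xs \<noteq> []"
    using assms by auto
  then show eq: "psums xs = butlast (psums xs) @ [n]"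
    using psums_eq_butlast_snoc assms(2) by blast
  show "sorted_wrt (<) (0 # butlast (psums xs) @ [n])"
    using sorted_wrt_0_psums[OF assms(1)] by (subst (asm) eq)
qed

lemma set_butlast_psums:
  assumes "\<forall>x\<in>set xs. 0 < x"
  shows "set (butlast (psums xs)) = set (psums xs) \<inter> {0<..<sum_list xs}"
proof (cases "xs = []")
  case False
  then have "psums xs = butlast (psums xs) @ [sum_list xs]"
    by (rule psums_eq_butlast_snoc)
  moreover have "sorted_wrt (<) (0 # psums xs)"
    using assms by (rule sorted_wrt_0_psums)
  ultimately have "sorted_wrt (<) (0 # butlast (psums xs) @ [sum_list xs])"
    by simp
  then show ?thesis
    by (subst (2) \<open>psums xs = _\<close>) (auto simp: sorted_wrt_append)
qed simp

lemma diffs_singleton [simp]: "diffs [x] = []"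
  by (simp add: diffs_def)

lemma diffs_Cons_Cons [simp]: "diffs (x # y # xs) = (y - x) # diffs (y # xs)"
  by (simp add: diffs_def)

lemma length_diffs [simp]: "length (diffs xs) = length xs - 1"
  by (simp add: diffs_def)

lemma diffs_psums: "diffs (c # map ((+) c) (psums xs)) = xs"
proof (induction xs arbitrary: c)
  case (Cons x xs)
  have "(+) c \<circ> (+) x = (+) (c + x)"
    by auto
  with Cons[of "c + x"] show ?case
    by simp
qed simp

lemma diffs_0_psums: "diffs (0 # psums xs) = xs"
  using diffs_psums[of 0 xs] by (simp add: map_idI)

lemma psums_diffs: "sorted (c # L) \<Longrightarrow> psums (diffs (c # L)) = map (\<lambda>x. x - c) L"
  by (induction L arbitrary: c) auto

lemma psums_diffs_0: "sorted L \<Longrightarrow> psums (diffs (0 # L)) = L"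
  using psums_diffs[of 0 L] by (simp add: map_idI)

lemma diffs_0_eq_iff: "sorted L \<Longrightarrow> diffs (0 # L) = xs \<longleftrightarrow> L = psums xs"
  using psums_diffs_0[of L] diffs_0_psums[of xs] by auto

lemma diffs_pos: "sorted_wrt (<) (c # L) \<Longrightarrow> \<forall>x\<in>set (diffs (c # L)). 0 < x"
  by (induction L arbitrary: c) auto

section \<open>Dyck words as sequences of runs\<close>

definition runs_word :: "(nat \<times> nat) list \<Rightarrow> nat list" where
  "runs_word R = concat (map (\<lambda>(a, b). replicate a 0 @ replicate b 1) R)"

definition positive_runs :: "(nat \<times> nat) list \<Rightarrow> bool" where
  "positive_runs R \<longleftrightarrow> (\<forall>(a, b) \<in> set R. 0 < a \<and> 0 < b)"

lemma runs_word_Nil [simp]: "runs_word [] = []"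
  by (simp add: runs_word_def)

lemma runs_word_Cons [simp]:
  "runs_word ((a, b) # R) = replicate a 0 @ replicate b 1 @ runs_word R"
  by (simp add: runs_word_def)

lemma positive_runs_Nil [simp]: "positive_runs []"
  by (simp add: positive_runs_def)

lemma positive_runs_Cons [simp]:
  "positive_runs ((a, b) # R) \<longleftrightarrow> 0 < a \<and> 0 < b \<and> positive_runs R"
  by (auto simp: positive_runs_def)

lemma positive_runs_iff:
  "positive_runs R \<longleftrightarrow> (\<forall>a \<in> set (map fst R). 0 < a) \<and> (\<forall>b \<in> set (map snd R). 0 < b)"
  by (auto simp: positive_runs_def)

lemma set_runs_word: "set (runs_word R) \<subseteq> {0, 1}"
  by (induction R) auto

lemma cnt_runs_word [simp]:
  "cnt 0 (runs_word R) = sum_list (map fst R)"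
  "cnt 1 (runs_word R) = sum_list (map snd R)"
  by (induction R) auto

lemma length_runs_word: "length (runs_word R) = sum_list (map fst R) + sum_list (map snd R)"
  by (induction R) auto

lemma pos_0_runs_word_Cons:
  assumes "0 < j" "j \<le> a + sum_list (map fst R)"
  shows "pos 0 (runs_word ((a, b) # R)) j =
    (if j \<le> a then j else a + b + pos 0 (runs_word R) (j - a))"
  using assms by (simp add: pos_replicate_append)

(* The letter 1 must not be simplified to Suc 0 here, or lemmas about pos 1 and cnt 1 no
   longer apply; hence the recurring "del: One_nat_def". *)
lemma pos_1_runs_word_Cons:
  assumes "0 < j" "j \<le> b + sum_list (map snd R)"
  shows "pos 1 (runs_word ((a, b) # R)) j =
    a + (if j \<le> b then j else b + pos 1 (runs_word R) (j - b))"
  using assms by (simp add: pos_replicate_append del: One_nat_def)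

lemma mem_image_plus_iff: "a < i \<Longrightarrow> i \<in> (+) a ` S \<longleftrightarrow> i - a \<in> S"
  for a i :: nat
  by force

lemma pos_0_runs_word_Suc_iff:
  assumes "positive_runs R" "0 < i" "i < sum_list (map fst R)"
  shows "pos 0 (runs_word R) (i + 1) = pos 0 (runs_word R) i + 1 \<longleftrightarrow>
    i \<notin> set (psums (map fst R))"
  using assms
proof (induction R arbitrary: i)
  case (Cons r R)
  obtain a b where r: "r = (a, b)"
    by fastforce
  consider "i < a" | "i = a" | "a < i"
    by linarith
  then show ?case
  proof cases
    case 1
    with Cons.prems show ?thesis
      by (auto simp: r pos_0_runs_word_Cons simp del: runs_word_Cons)
  next
    case 2
    have "0 < pos 0 (runs_word R) 1"
      using Cons.prems 2 by (intro pos_gt_0) (auto simp: r)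
    with Cons.prems 2 show ?thesis
      by (auto simp: r pos_0_runs_word_Cons simp del: runs_word_Cons)
  next
    case 3
    with Cons.IH[of "i - a"] Cons.prems show ?thesis
      by (auto simp: r pos_0_runs_word_Cons mem_image_plus_iff Suc_diff_le
          simp del: runs_word_Cons)
  qed
qed simp

lemma pos_1_runs_word_Suc_iff:
  assumes "positive_runs R" "0 < i" "i < sum_list (map snd R)"
  shows "pos 1 (runs_word R) (i + 1) = pos 1 (runs_word R) i + 1 \<longleftrightarrow>
    i \<notin> set (psums (map snd R))"
  using assms
proof (induction R arbitrary: i)
  case (Cons r R)
  obtain a b where r: "r = (a, b)"
    by fastforce
  consider "i < b" | "i = b" | "b < i"
    by linarith
  then show ?case
  proof cases
    case 1
    with Cons.prems show ?thesis
      by (auto simp: r pos_1_runs_word_Cons simp del: runs_word_Cons One_nat_def)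
  next
    case 2
    obtain a' b' R' where R: "R = (a', b') # R'"
      using Cons.prems 2 by (cases R) (auto simp: r)
    then have "pos 1 (runs_word R) 1 = a' + 1"
      using Cons.prems by (simp add: r pos_1_runs_word_Cons del: runs_word_Cons One_nat_def)
    with Cons.prems 2 R show ?thesis
      by (auto simp: r pos_1_runs_word_Cons simp del: runs_word_Cons One_nat_def)
  next
    case 3
    with Cons.IH[of "i - b"] Cons.prems show ?thesis
      by (auto simp: r pos_1_runs_word_Cons mem_image_plus_iff Suc_diff_le
          simp del: runs_word_Cons One_nat_def)
  qed
qed simp

lemma cnt_take_runs_word_Cons:
  "cnt 0 (take i (runs_word ((a, b) # R))) = min i a + cnt 0 (take (i - a - b) (runs_word R))"
  "cnt 1 (take i (runs_word ((a, b) # R))) = min (i - a) b + cnt 1 (take (i - a - b) (runs_word R))"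
  by (simp_all add: take_append diff_diff_add del: One_nat_def)

(* The offset d counts the surplus of zeros in a preceding prefix; it makes the ballot
   condition on runs amenable to induction over the list of runs. *)
definition runs_ballot :: "nat \<Rightarrow> (nat \<times> nat) list \<Rightarrow> bool" where
  "runs_ballot d R \<longleftrightarrow> (\<forall>m < length R. psums (map snd R) ! m \<le> psums (map fst R) ! m + d)"

lemma runs_ballot_Cons [simp]:
  "runs_ballot d ((a, b) # R) \<longleftrightarrow> b \<le> a + d \<and> runs_ballot (a + d - b) R"
  by (auto simp: runs_ballot_def All_less_Suc2)

lemma runs_ballot_0_iff_nth_le:
  assumes "length LA = length LB"
    and that: "psums (map fst R) = LA @ [n]" "psums (map snd R) = LB @ [n]"
  shows "runs_ballot 0 R \<longleftrightarrow> (\<forall>m < length LA. LB ! m \<le> LA ! m)"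
proof -
  have "length R = Suc (length LA)"
    using arg_cong[OF that(1), of length] by simp
  with assms that show ?thesis
    by (auto simp: runs_ballot_def All_less_Suc nth_append)
qed

lemma prefix_bound_runs_word_iff:
  "(\<forall>i. cnt 1 (take i (runs_word R)) \<le> cnt 0 (take i (runs_word R)) + d) \<longleftrightarrow> runs_ballot d R"
proof (induction R arbitrary: d)
  case (Cons r R)
  obtain a b where r: "r = (a, b)"
    by fastforce
  show ?case
  proof
    assume bound: "\<forall>i. cnt 1 (take i (runs_word (r # R))) \<le> cnt 0 (take i (runs_word (r # R))) + d"
    have "b \<le> a + d"
      using bound[rule_format, of "a + b"] by (simp add: r cnt_take_runs_word_Cons)
    moreover have "cnt 1 (take i (runs_word R)) \<le> cnt 0 (take i (runs_word R)) + (a + d - b)" for i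
      using bound[rule_format, of "a + b + i"] \<open>b \<le> a + d\<close> by (simp add: r cnt_take_runs_word_Cons)
    then have "runs_ballot (a + d - b) R"
      using Cons.IH by blast
    ultimately show "runs_ballot d (r # R)"
      by (simp add: r)
  next
    assume "runs_ballot d (r # R)"
    then have "b \<le> a + d" and "runs_ballot (a + d - b) R"
      by (simp_all add: r)
    then have IH: "cnt 1 (take i (runs_word R)) \<le> cnt 0 (take i (runs_word R)) + (a + d - b)" for i
      using Cons.IH by blast
    show "\<forall>i. cnt 1 (take i (runs_word (r # R))) \<le> cnt 0 (take i (runs_word (r # R))) + d"
    proof
      fix i
      show "cnt 1 (take i (runs_word (r # R))) \<le> cnt 0 (take i (runs_word (r # R))) + d"
        using IH[of "i - a - b"] \<open>b \<le> a + d\<close>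
        by (cases "i \<le> a + b") (auto simp: r cnt_take_runs_word_Cons)
    qed
  qed
qed (simp add: runs_ballot_def)

lemma balanced_prefix_runs_word_iff:
  assumes "positive_runs R" "runs_ballot d R"
  shows "i \<le> length (runs_word R) \<and>
      cnt 0 (take i (runs_word R)) + d = cnt 1 (take i (runs_word R)) \<longleftrightarrow>
    (i = 0 \<and> d = 0) \<or>
    (\<exists>m < length R. i = psums (map fst R) ! m + psums (map snd R) ! m \<and>
      psums (map fst R) ! m + d = psums (map snd R) ! m)"
  using assms
proof (induction R arbitrary: d i)
  case (Cons r R)
  obtain a b where r: "r = (a, b)"
    by fastforce
  have ab: "0 < a" "0 < b" "b \<le> a + d" and R: "positive_runs R" "runs_ballot (a + d - b) R"
    using Cons.prems by (auto simp: r)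
  let ?A = "psums (map fst R)" and ?B = "psums (map snd R)"
  have rhs: "(\<exists>m < length (r # R). i = psums (map fst (r # R)) ! m + psums (map snd (r # R)) ! m \<and>
      psums (map fst (r # R)) ! m + d = psums (map snd (r # R)) ! m) \<longleftrightarrow>
    (i = a + b \<and> a + d = b) \<or>
    (\<exists>m < length R. i = a + ?A ! m + (b + ?B ! m) \<and> a + ?A ! m + d = b + ?B ! m)"
    by (auto simp: r Ex_less_Suc2)
  show ?case
  proof (cases "i \<le> a + b")
    case True
    have "\<forall>x\<in>set ?A. 0 < x"
      using sorted_wrt_0_psums[of "map fst R"] R(1) by (simp add: positive_runs_iff)
    then have "0 < ?A ! m" if "m < length R" for m
      using that by simp
    with True ab show ?thesis
      unfolding rhs by (auto simp: r cnt_take_runs_word_Cons)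
  next
    case False
    with ab Cons.IH[OF R, of "i - a - b"] show ?thesis
      unfolding rhs by (auto simp: r cnt_take_runs_word_Cons)
  qed
qed simp

(* The leading block of ones makes the decomposition inductive over Cons. *)
lemma ex_runs_word:
  assumes "set w \<subseteq> {0, 1}" "w = [] \<or> last w = 1"
  shows "\<exists>c R. positive_runs R \<and> w = replicate c 1 @ runs_word R"
  using assms
proof (induction w)
  case Nil
  show ?case
    by (rule exI[of _ 0], rule exI[of _ "[]"]) simp
next
  case (Cons x w)
  show ?case
  proof (cases "w = []")
    case True
    with Cons.prems show ?thesis
      by (intro exI[of _ 1] exI[of _ "[]"]) simp
  next
    case False
    with Cons obtain c R where R: "positive_runs R" "w = replicate c 1 @ runs_word R"
      by auto
    consider "x = 1" | "x = 0" "0 < c" | "x = 0" "c = 0"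
      using Cons.prems(1) by auto
    then show ?thesis
    proof cases
      case 1
      with R show ?thesis
        by (intro exI[of _ "Suc c"] exI[of _ R]) simp
    next
      case 2
      with R show ?thesis
        by (intro exI[of _ 0] exI[of _ "(1, c) # R"]) simp
    next
      case 3
      with R False obtain a b R' where "R = (a, b) # R'"
        by (cases R) auto
      with 3 R show ?thesis
        by (intro exI[of _ 0] exI[of _ "(Suc a, b) # R'"]) simp
    qed
  qed
qed

definition dyck_runs :: "nat \<Rightarrow> (nat \<times> nat) list \<Rightarrow> bool" where
  "dyck_runs n R \<longleftrightarrow> positive_runs R \<and> sum_list (map fst R) = n \<and> sum_list (map snd R) = n \<and>
    runs_ballot 0 R"

lemma dyck_runs_word_iff:
  assumes "positive_runs R"
  shows "dyck n (runs_word R) \<longleftrightarrow> dyck_runs n R"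
proof -
  have "(\<forall>i \<le> length w. cnt 1 (take i w) \<le> cnt 0 (take i w)) \<longleftrightarrow>
      (\<forall>i. cnt 1 (take i w) \<le> cnt 0 (take i w))" if "cnt 1 w = cnt 0 w" for w
    using that by (metis nat_le_linear take_all order_refl)
  then show ?thesis
    using assms prefix_bound_runs_word_iff[of R 0] set_runs_word[of R]
    by (auto simp: dyck_def dyck_runs_def simp del: One_nat_def)
qed

lemma dyck_last:
  assumes "dyck n w"
  shows "w = [] \<or> last w = 1"
proof (cases "w = []")
  case False
  then obtain u y where w: "w = u @ [y]"
    by (metis append_butlast_last_id)
  have "cnt 1 u \<le> cnt 0 u"
    using assms w by (auto simp: dyck_def dest: spec[of _ "length u"])
  moreover have "cnt 0 u + (if y = 0 then 1 else 0) = cnt 1 u + (if y = 1 then 1 else 0)"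
    using assms w by (simp add: dyck_def)
  moreover have "y \<in> {0, 1}"
    using assms w by (auto simp: dyck_def)
  ultimately show ?thesis
    using w by (auto split: if_splits)
qed simp

lemma dyck_iff_runs_word: "dyck n w \<longleftrightarrow> (\<exists>R. dyck_runs n R \<and> w = runs_word R)"
proof
  assume dyck: "dyck n w"
  then obtain c R where R: "positive_runs R" "w = replicate c 1 @ runs_word R"
    using ex_runs_word[of w] dyck_last[of n w] by (auto simp: dyck_def)
  have "c = 0"
  proof (rule ccontr)
    assume "c \<noteq> 0"
    then have first: "take 1 w = [1]"
      using R(2) by (cases c) auto
    then have "1 \<le> length w"
      by (cases w) auto
    then have "cnt 1 (take 1 w) \<le> cnt 0 (take 1 w)"
      using dyck by (simp add: dyck_def del: One_nat_def)
    with first show False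
      by simp
  qed
  with R dyck show "\<exists>R. dyck_runs n R \<and> w = runs_word R"
    using dyck_runs_word_iff by auto
next
  assume "\<exists>R. dyck_runs n R \<and> w = runs_word R"
  then show "dyck n w"
    using dyck_runs_word_iff by (auto simp: dyck_runs_def)
qed

lemma dyck_runs_psums:
  assumes "dyck_runs n R" "0 < n"
  shows "psums (map fst R) = butlast (psums (map fst R)) @ [n]"
    and "psums (map snd R) = butlast (psums (map snd R)) @ [n]"
    and "sorted_wrt (<) (0 # butlast (psums (map fst R)) @ [n])"
    and "sorted_wrt (<) (0 # butlast (psums (map snd R)) @ [n])"
    and "\<forall>m < length (butlast (psums (map fst R))).
      butlast (psums (map snd R)) ! m \<le> butlast (psums (map fst R)) ! m"
proof -
  show psums: "psums (map fst R) = butlast (psums (map fst R)) @ [n]"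
    "psums (map snd R) = butlast (psums (map snd R)) @ [n]"
    and "sorted_wrt (<) (0 # butlast (psums (map fst R)) @ [n])"
    "sorted_wrt (<) (0 # butlast (psums (map snd R)) @ [n])"
    using assms positive_psums_snoc[of "map fst R" n] positive_psums_snoc[of "map snd R" n]
    by (simp_all add: dyck_runs_def positive_runs_iff)
  show "\<forall>m < length (butlast (psums (map fst R))).
      butlast (psums (map snd R)) ! m \<le> butlast (psums (map fst R)) ! m"
    using assms(1) runs_ballot_0_iff_nth_le[OF _ psums] by (simp add: dyck_runs_def)
qed

section \<open>Ranks in sorted sets\<close>

definition ballot_sets :: "'a::linorder set \<Rightarrow> 'a set \<Rightarrow> bool" where
  "ballot_sets A B \<longleftrightarrow> (\<forall>y. card {x \<in> A. x < y} \<le> card {x \<in> B. x < y})"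

definition rank_matches :: "'a::linorder set \<Rightarrow> 'a set \<Rightarrow> 'a set" where
  "rank_matches A B = {x \<in> A \<inter> B. card {y \<in> A. y < x} = card {y \<in> B. y < x}}"

lemma set_take_sorted:
  fixes L :: "'a::linorder list"
  assumes "sorted_wrt (<) L" "t < length L"
  shows "set (take t L) = {x \<in> set L. x < L ! t}"
proof -
  have nth_less: "L ! j < L ! t \<longleftrightarrow> j < t" if "j < length L" for j
    using assms that sorted_wrt_nth_less[OF assms(1), of j t]
      sorted_wrt_nth_less[OF assms(1), of t j]
    by (cases j t rule: linorder_cases) auto
  show ?thesis
  proof (intro set_eqI iffI)
    fix x assume "x \<in> set (take t L)"
    then obtain j where "j < t" "x = L ! j"
      using assms(2) by (auto simp: in_set_conv_nth)
    with assms(2) nth_less show "x \<in> {x \<in> set L. x < L ! t}"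
      by auto
  next
    fix x assume "x \<in> {x \<in> set L. x < L ! t}"
    then obtain j where "j < length L" "x = L ! j" "x < L ! t"
      by (auto simp: in_set_conv_nth)
    with nth_less show "x \<in> set (take t L)"
      by (auto simp: in_set_conv_nth intro!: exI[of _ j])
  qed
qed

lemma card_less_nth_sorted:
  fixes L :: "'a::linorder list"
  assumes "sorted_wrt (<) L" "m < length L"
  shows "card {x \<in> set L. x < L ! m} = m"
proof -
  have "distinct L"
    using assms(1) by (simp add: strict_sorted_iff)
  with assms show ?thesis
    by (simp add: set_take_sorted[symmetric] distinct_card)
qed

lemma ex_take_eq_less:
  fixes L :: "'a::linorder list"
  assumes "sorted_wrt (<) L"
  shows "\<exists>t \<le> length L. set (take t L) = {x \<in> set L. x < y}"
  using assms
proof (induction L)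
  case (Cons a L)
  show ?case
  proof (cases "a < y")
    case True
    with Cons obtain t where "t \<le> length L" "set (take t L) = {x \<in> set L. x < y}"
      by auto
    with True show ?thesis
      by (intro exI[of _ "Suc t"]) auto
  next
    case False
    with Cons.prems show ?thesis
      by (intro exI[of _ 0]) auto
  qed
qed simp

lemma card_less_sorted:
  fixes L :: "'a::linorder list"
  assumes "sorted_wrt (<) L"
  shows "card {x \<in> set L. x < y} = card {m. m < length L \<and> L ! m < y}"
proof -
  have "{x \<in> set L. x < y} = (\<lambda>m. L ! m) ` {m. m < length L \<and> L ! m < y}"
    by (auto simp: in_set_conv_nth)
  moreover have "inj_on (\<lambda>m. L ! m) {m. m < length L \<and> L ! m < y}"
    using assms by (auto simp: inj_on_def strict_sorted_iff nth_eq_iff_index_eq)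
  ultimately show ?thesis
    by (simp add: card_image)
qed

lemma ballot_sets_iff_nth_le:
  assumes A: "sorted_wrt (<) LA" and B: "sorted_wrt (<) LB" and len: "length LA = length LB"
  shows "ballot_sets (set LA) (set LB) \<longleftrightarrow> (\<forall>m < length LA. LB ! m \<le> LA ! m)"
proof -
  have card_A: "card {x \<in> set LA. x < y} = card {m. m < length LA \<and> LA ! m < y}"
    and card_B: "card {x \<in> set LB. x < y} = card {m. m < length LA \<and> LB ! m < y}" for y
    using card_less_sorted[OF A] card_less_sorted[OF B] len by simp_all
  show ?thesis
  proof (intro iffI allI impI)
    fix m assume bal: "ballot_sets (set LA) (set LB)" and m: "m < length LA"
    show "LB ! m \<le> LA ! m"
    proof (rule ccontr)
      assume "\<not> LB ! m \<le> LA ! m"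
      then have "LA ! j < LB ! m" if "j \<le> m" for j
        using that m sorted_wrt_nth_less[OF A, of j m] by (cases "j = m") auto
      with m have "{..m} \<subseteq> {j. j < length LA \<and> LA ! j < LB ! m}"
        by auto
      then have "Suc m \<le> card {x \<in> set LA. x < LB ! m}"
        unfolding card_A using card_mono[of "{j. j < length LA \<and> LA ! j < LB ! m}" "{..m}"]
        by simp
      moreover have "card {x \<in> set LB. x < LB ! m} = m"
        using card_less_nth_sorted[OF B] m len by simp
      ultimately show False
        using bal by (auto simp: ballot_sets_def dest: spec[of _ "LB ! m"])
    qed
  next
    assume "\<forall>m < length LA. LB ! m \<le> LA ! m"
    then have "{m. m < length LA \<and> LA ! m < y} \<subseteq> {m. m < length LA \<and> LB ! m < y}" for y
      by fastforce
    then show "ballot_sets (set LA) (set LB)"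
      by (simp add: ballot_sets_def card_A card_B card_mono)
  qed
qed

lemma rank_matches_sorted:
  assumes A: "sorted_wrt (<) LA" and B: "sorted_wrt (<) LB" and len: "length LA = length LB"
  shows "rank_matches (set LA) (set LB) = {LA ! m | m. m < length LA \<and> LA ! m = LB ! m}"
proof (intro set_eqI iffI)
  fix x assume "x \<in> rank_matches (set LA) (set LB)"
  then obtain i j where "i < length LA" "x = LA ! i" "j < length LB" "x = LB ! j"
    "card {y \<in> set LA. y < x} = card {y \<in> set LB. y < x}"
    by (auto simp: rank_matches_def in_set_conv_nth)
  moreover from this have "i = j"
    using card_less_nth_sorted[OF A, of i] card_less_nth_sorted[OF B, of j] by simp
  ultimately show "x \<in> {LA ! m | m. m < length LA \<and> LA ! m = LB ! m}"
    by auto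
next
  fix x assume "x \<in> {LA ! m | m. m < length LA \<and> LA ! m = LB ! m}"
  then obtain m where m: "m < length LA" "x = LA ! m" "x = LB ! m"
    by auto
  then have "x \<in> set LA" "x \<in> set LB"
    using len by (metis nth_mem)+
  moreover have "card {y \<in> set LA. y < x} = m" "card {y \<in> set LB. y < x} = m"
    using m len card_less_nth_sorted[OF A, of m] card_less_nth_sorted[OF B, of m] by simp_all
  ultimately show "x \<in> rank_matches (set LA) (set LB)"
    by (simp add: rank_matches_def)
qed

section \<open>Run ends of Dyck words\<close>

definition run_ends :: "nat \<Rightarrow> nat \<Rightarrow> nat list \<Rightarrow> nat set" where
  "run_ends a n w = {i \<in> {0<..<n}. pos a w (i + 1) \<noteq> pos a w i + 1}"

lemma run_ends_runs_word:
  assumes "positive_runs R"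
  shows "run_ends 0 (sum_list (map fst R)) (runs_word R) = set (butlast (psums (map fst R)))"
    and "run_ends 1 (sum_list (map snd R)) (runs_word R) = set (butlast (psums (map snd R)))"
proof -
  have "\<forall>a \<in> set (map fst R). 0 < a" "\<forall>b \<in> set (map snd R). 0 < b"
    using assms by (simp_all add: positive_runs_iff)
  then show "run_ends 0 (sum_list (map fst R)) (runs_word R) = set (butlast (psums (map fst R)))"
    and "run_ends 1 (sum_list (map snd R)) (runs_word R) = set (butlast (psums (map snd R)))"
    using pos_0_runs_word_Suc_iff[OF assms] pos_1_runs_word_Suc_iff[OF assms]
    by (auto simp: run_ends_def set_butlast_psums)
qed

lemma run_ends_dyck_runs:
  assumes "dyck_runs n R"
  shows "run_ends 0 n (runs_word R) = set (butlast (psums (map fst R)))"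
    and "run_ends 1 n (runs_word R) = set (butlast (psums (map snd R)))"
proof -
  have R: "positive_runs R" "sum_list (map fst R) = n" "sum_list (map snd R) = n"
    using assms by (simp_all add: dyck_runs_def)
  show "run_ends 0 n (runs_word R) = set (butlast (psums (map fst R)))"
    and "run_ends 1 n (runs_word R) = set (butlast (psums (map snd R)))"
    using run_ends_runs_word[OF R(1), unfolded R(2,3)] .
qed

lemma free_comp_eq_iff:
  assumes "is_composition X n" "0 < n"
  shows "free_comp n w = X \<longleftrightarrow> run_ends 0 n w \<union> run_ends 1 n w = set (butlast (psums X))"
proof -
  define L where "L = filter (\<lambda>i. \<not> linked w i) [1..<n]"
  have psums_X: "psums X = butlast (psums X) @ [n]"
    and cuts: "sorted_wrt (<) (0 # butlast (psums X) @ [n])"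
    using assms positive_psums_snoc[of X n] by (simp_all add: is_composition_def)
  from cuts have sorted_X: "sorted_wrt (<) (butlast (psums X))"
    by (simp add: sorted_wrt_append)
  have sorted_L: "sorted_wrt (<) L" "sorted (L @ [n])"
    by (auto simp: L_def sorted_wrt_filter sorted_append intro: sorted_wrt_filter)
  have set_L: "set L = run_ends 0 n w \<union> run_ends 1 n w"
    by (auto simp: L_def run_ends_def linked_def)
  have "free_comp n w = X \<longleftrightarrow> L @ [n] = psums X"
    unfolding free_comp_def L_def[symmetric] using sorted_L(2) by (simp add: diffs_0_eq_iff)
  also have "\<dots> \<longleftrightarrow> L = butlast (psums X)"
    by (subst psums_X) simp
  also have "\<dots> \<longleftrightarrow> set L = set (butlast (psums X))"
    using strict_sorted_equal[OF sorted_L(1) sorted_X] by blast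
  finally show ?thesis
    by (simp add: set_L)
qed

lemma hit_runs_word_iff:
  assumes "dyck_runs n R"
  shows "j \<le> n \<and> cnt 0 (take (2 * j) (runs_word R)) = j \<and> cnt 1 (take (2 * j) (runs_word R)) = j \<longleftrightarrow>
    j = 0 \<or> (\<exists>m < length R. psums (map fst R) ! m = j \<and> psums (map snd R) ! m = j)"
proof -
  let ?w = "runs_word R"
  have R: "positive_runs R" "runs_ballot 0 R"
    using assms by (simp_all add: dyck_runs_def)
  have "length ?w = 2 * n"
    using assms by (simp add: dyck_runs_def length_runs_word)
  then have total: "cnt 0 (take i ?w) + cnt 1 (take i ?w) = min i (2 * n)" for i
    using cnt_0_add_cnt_1[OF order_trans[OF set_take_subset set_runs_word]] by simp
  have "j \<le> n \<and> cnt 0 (take (2 * j) ?w) = j \<and> cnt 1 (take (2 * j) ?w) = j \<longleftrightarrow>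
      2 * j \<le> length ?w \<and> cnt 0 (take (2 * j) ?w) + 0 = cnt 1 (take (2 * j) ?w)"
    using total[of "2 * j"] \<open>length ?w = 2 * n\<close> by (cases "j \<le> n") (auto simp: min_def)
  also have "\<dots> \<longleftrightarrow> j = 0 \<or>
      (\<exists>m < length R. psums (map fst R) ! m = j \<and> psums (map snd R) ! m = j)"
    unfolding balanced_prefix_runs_word_iff[OF R] by auto
  finally show ?thesis .
qed

lemma hits_runs_word:
  assumes "dyck_runs n R" "0 < n"
  shows "hits n (runs_word R) =
    2 + card (rank_matches (set (butlast (psums (map fst R)))) (set (butlast (psums (map snd R)))))"
proof -
  define LA LB where "LA = butlast (psums (map fst R))" and "LB = butlast (psums (map snd R))"
  let ?Q = "rank_matches (set LA) (set LB)"
  have A: "psums (map fst R) = LA @ [n]" "sorted_wrt (<) (0 # LA @ [n])"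
    and B: "psums (map snd R) = LB @ [n]" "sorted_wrt (<) (0 # LB @ [n])"
    using dyck_runs_psums[OF assms] by (simp_all add: LA_def LB_def)
  have len: "length LA = length LB" "length R = Suc (length LA)"
    using arg_cong[OF A(1), of length] arg_cong[OF B(1), of length] by simp_all
  have sorted: "sorted_wrt (<) LA" "sorted_wrt (<) LB"
    using A(2) B(2) by (simp_all add: sorted_wrt_append)
  have "(\<exists>m < Suc (length LA). (LA @ [n]) ! m = j \<and> (LB @ [n]) ! m = j) \<longleftrightarrow>
      j = n \<or> (\<exists>m < length LA. LA ! m = j \<and> LB ! m = j)" for j
    unfolding Ex_less_Suc using len(1) by (auto simp: nth_append)
  then have "{j. j \<le> n \<and> cnt 0 (take (2 * j) (runs_word R)) = j \<and>
      cnt 1 (take (2 * j) (runs_word R)) = j} = insert 0 (insert n ?Q)"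
    unfolding hit_runs_word_iff[OF assms(1)] A(1) B(1) len(2) rank_matches_sorted[OF sorted len(1)]
    by auto
  moreover have "?Q \<subseteq> {0<..<n}"
    using A(2) by (auto simp: rank_matches_def sorted_wrt_append)
  then have "finite ?Q" "0 \<notin> ?Q" "n \<notin> ?Q"
    by (auto intro: finite_subset)
  ultimately show ?thesis
    using assms(2) by (simp add: hits_def LA_def LB_def)
qed

lemma hits_eq_card_rank_matches:
  assumes "dyck n w" "0 < n"
  shows "hits n w = 2 + card (rank_matches (run_ends 0 n w) (run_ends 1 n w))"
proof -
  obtain R where "dyck_runs n R" "w = runs_word R"
    using assms(1) dyck_iff_runs_word by auto
  then show ?thesis
    using hits_runs_word[OF _ assms(2)] run_ends_dyck_runs by simp
qed

definition ballot_pairs :: "nat \<Rightarrow> (nat set \<times> nat set) set" where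
  "ballot_pairs n = {(A, B). A \<subseteq> {0<..<n} \<and> B \<subseteq> {0<..<n} \<and> card A = card B \<and> ballot_sets A B}"

lemma cuts_in_ballot_pairs_iff:
  assumes A: "sorted_wrt (<) (0 # LA @ [n])" and B: "sorted_wrt (<) (0 # LB @ [n])"
  shows "(set LA, set LB) \<in> ballot_pairs n \<longleftrightarrow>
    length LA = length LB \<and> (\<forall>m < length LA. LB ! m \<le> LA ! m)"
proof -
  have "sorted_wrt (<) LA" "sorted_wrt (<) LB" "set LA \<subseteq> {0<..<n}" "set LB \<subseteq> {0<..<n}"
    using A B by (auto simp: sorted_wrt_append)
  then show ?thesis
    using ballot_sets_iff_nth_le by (auto simp: ballot_pairs_def distinct_card strict_sorted_iff)
qed

definition runs_of_cuts :: "nat \<Rightarrow> nat list \<Rightarrow> nat list \<Rightarrow> (nat \<times> nat) list" where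
  "runs_of_cuts n LA LB = zip (diffs (0 # LA @ [n])) (diffs (0 # LB @ [n]))"

lemma dyck_runs_runs_of_cuts:
  assumes A: "sorted_wrt (<) (0 # LA @ [n])" and B: "sorted_wrt (<) (0 # LB @ [n])"
    and len: "length LA = length LB" and le: "\<forall>m < length LA. LB ! m \<le> LA ! m"
  shows "psums (map fst (runs_of_cuts n LA LB)) = LA @ [n]"
    and "psums (map snd (runs_of_cuts n LA LB)) = LB @ [n]"
    and "dyck_runs n (runs_of_cuts n LA LB)"
proof -
  have fst: "map fst (runs_of_cuts n LA LB) = diffs (0 # LA @ [n])"
    and snd: "map snd (runs_of_cuts n LA LB) = diffs (0 # LB @ [n])"
    using len by (simp_all add: runs_of_cuts_def)
  have "sorted (LA @ [n])" "sorted (LB @ [n])"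
    using A B by (simp_all add: strict_sorted_imp_sorted)
  then show psA: "psums (map fst (runs_of_cuts n LA LB)) = LA @ [n]"
    and psB: "psums (map snd (runs_of_cuts n LA LB)) = LB @ [n]"
    unfolding fst snd by (simp_all add: psums_diffs_0)
  have "positive_runs (runs_of_cuts n LA LB)"
    unfolding positive_runs_iff fst snd using diffs_pos[OF A] diffs_pos[OF B] by simp
  moreover have "sum_list (map fst (runs_of_cuts n LA LB)) = n"
    and "sum_list (map snd (runs_of_cuts n LA LB)) = n"
    using sum_list_eq_if_psums_snoc psA psB by blast+
  moreover have "runs_ballot 0 (runs_of_cuts n LA LB)"
    using runs_ballot_0_iff_nth_le[OF len psA psB] le by simp
  ultimately show "dyck_runs n (runs_of_cuts n LA LB)"
    by (simp add: dyck_runs_def)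
qed

lemma runs_of_cuts_psums:
  assumes "dyck_runs n R" "0 < n"
  shows "runs_of_cuts n (butlast (psums (map fst R))) (butlast (psums (map snd R))) = R"
  using dyck_runs_psums(1,2)[OF assms] diffs_0_psums[of "map fst R"] diffs_0_psums[of "map snd R"]
  by (simp add: runs_of_cuts_def zip_map_fst_snd)

lemma run_ends_runs_of_cuts:
  assumes "0 < n" "(A, B) \<in> ballot_pairs n"
  defines "R \<equiv> runs_of_cuts n (sorted_list_of_set A) (sorted_list_of_set B)"
  shows "dyck_runs n R" "run_ends 0 n (runs_word R) = A" "run_ends 1 n (runs_word R) = B"
proof -
  define LA LB where "LA = sorted_list_of_set A" and "LB = sorted_list_of_set B"
  have "A \<subseteq> {0<..<n}" "B \<subseteq> {0<..<n}"
    using assms(2) by (simp_all add: ballot_pairs_def)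
  then have set_L: "set LA = A" "set LB = B"
    by (simp_all add: LA_def LB_def finite_subset)
  have sorted_L: "sorted_wrt (<) (0 # LA @ [n])" "sorted_wrt (<) (0 # LB @ [n])"
    using \<open>A \<subseteq> _\<close> \<open>B \<subseteq> _\<close> set_L assms(1) by (auto simp: LA_def LB_def sorted_wrt_append)
  then have "length LA = length LB" "\<forall>m < length LA. LB ! m \<le> LA ! m"
    using cuts_in_ballot_pairs_iff[OF sorted_L] assms(2) set_L by auto
  note R = dyck_runs_runs_of_cuts[OF sorted_L this, unfolded LA_def LB_def, folded R_def]
  show "dyck_runs n R"
    by (fact R(3))
  show "run_ends 0 n (runs_word R) = A" "run_ends 1 n (runs_word R) = B"
    using run_ends_dyck_runs[OF R(3)] R(1,2) set_L unfolding LA_def LB_def by simp_all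
qed

lemma bij_betw_run_ends:
  assumes "0 < n"
  shows "bij_betw (\<lambda>w. (run_ends 0 n w, run_ends 1 n w)) {w. dyck n w} (ballot_pairs n)"
proof -
  let ?ends = "\<lambda>w. (run_ends 0 n w, run_ends 1 n w)"
    and ?word = "\<lambda>(A, B). runs_word (runs_of_cuts n (sorted_list_of_set A) (sorted_list_of_set B))"
  have "?word (?ends w) = w \<and> ?ends w \<in> ballot_pairs n" if "dyck n w" for w
  proof -
    obtain R where R: "dyck_runs n R" "w = runs_word R"
      using \<open>dyck n w\<close> dyck_iff_runs_word by auto
    define LA LB where "LA = butlast (psums (map fst R))" and "LB = butlast (psums (map snd R))"
    have ends: "?ends w = (set LA, set LB)"
      using run_ends_dyck_runs[OF R(1)] R(2) by (simp add: LA_def LB_def)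
    note cuts = dyck_runs_psums[OF R(1) assms, folded LA_def LB_def]
    have "sorted_list_of_set (set LA) = LA" "sorted_list_of_set (set LB) = LB"
      using cuts(3,4) by (simp_all add: sorted_list_of_set.idem_if_sorted_distinct
          sorted_wrt_append strict_sorted_iff)
    then have "?word (?ends w) = w"
      unfolding ends using runs_of_cuts_psums[OF R(1) assms, folded LA_def LB_def] R(2) by simp
    moreover have "length LA = length LB"
      by (simp add: LA_def LB_def)
    ultimately show ?thesis
      unfolding ends using cuts_in_ballot_pairs_iff[OF cuts(3,4)] cuts(5) by simp
  qed
  moreover have "dyck n (?word (A, B)) \<and> ?ends (?word (A, B)) = (A, B)"
    if "(A, B) \<in> ballot_pairs n" for A B
    using run_ends_runs_of_cuts[OF assms that] dyck_iff_runs_word by auto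
  ultimately show ?thesis
    by (intro bij_betw_byWitness[where f' = ?word]) auto
qed

section \<open>Motzkin paths from pairs of sets\<close>

definition steps_of_sets :: "'a set \<Rightarrow> 'a set \<Rightarrow> 'a list \<Rightarrow> int list" where
  "steps_of_sets A B cs = map (\<lambda>c. of_bool (c \<in> B) - of_bool (c \<in> A)) cs"

lemma length_steps_of_sets [simp]: "length (steps_of_sets A B cs) = length cs"
  by (simp add: steps_of_sets_def)

lemma sum_list_take_steps_of_sets:
  assumes "distinct cs"
  shows "sum_list (take t (steps_of_sets A B cs)) =
    int (card (B \<inter> set (take t cs))) - int (card (A \<inter> set (take t cs)))"
proof -
  have "distinct (take t cs)"
    using assms by simp
  then show ?thesis
    by (simp add: steps_of_sets_def take_map sum_list_distinct_conv_sum_set sum_subtractf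
        Int_commute Int_def)
qed

lemma sum_list_take_steps_of_sets_below:
  assumes "distinct cs" "A \<union> B = set cs" "set (take t cs) = {x \<in> set cs. x < y}"
  shows "sum_list (take t (steps_of_sets A B cs)) =
    int (card {x \<in> B. x < y}) - int (card {x \<in> A. x < y})"
proof -
  have "A \<inter> set (take t cs) = {x \<in> A. x < y}" "B \<inter> set (take t cs) = {x \<in> B. x < y}"
    using assms(2,3) by auto
  then show ?thesis
    using sum_list_take_steps_of_sets[OF assms(1)] by simp
qed

lemma motzkin_steps_of_sets_iff:
  assumes sorted: "sorted_wrt (<) cs" and cover: "A \<union> B = set cs"
  shows "motzkin (length cs) (steps_of_sets A B cs) \<longleftrightarrow> card A = card B \<and> ballot_sets A B"
proof -
  have distinct: "distinct cs"
    using sorted by (simp add: strict_sorted_iff)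
  have "A \<inter> set cs = A" "B \<inter> set cs = B"
    using cover by auto
  then have total: "sum_list (steps_of_sets A B cs) = int (card B) - int (card A)"
    using sum_list_take_steps_of_sets[OF distinct, of "length cs" A B] by simp
  have steps: "set (steps_of_sets A B cs) \<subseteq> {1, -1, 0}"
    by (auto simp: steps_of_sets_def)
  show ?thesis
  proof
    assume motzkin: "motzkin (length cs) (steps_of_sets A B cs)"
    have "card {x \<in> A. x < y} \<le> card {x \<in> B. x < y}" for y
    proof -
      obtain t where t: "t \<le> length cs" "set (take t cs) = {x \<in> set cs. x < y}"
        using ex_take_eq_less[OF sorted] by blast
      with motzkin have "0 \<le> sum_list (take t (steps_of_sets A B cs))"
        by (simp add: motzkin_def)
      with sum_list_take_steps_of_sets_below[OF distinct cover t(2)] show ?thesis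
        by simp
    qed
    with motzkin total show "card A = card B \<and> ballot_sets A B"
      by (simp add: motzkin_def ballot_sets_def)
  next
    assume balanced: "card A = card B \<and> ballot_sets A B"
    have "sum_list (take t (steps_of_sets A B cs)) \<ge> 0" if "t \<le> length cs" for t
    proof (cases "t < length cs")
      case True
      with balanced show ?thesis
        using sum_list_take_steps_of_sets_below[OF distinct cover set_take_sorted[OF sorted True]]
        by (simp add: ballot_sets_def)
    next
      case False
      with that total balanced show ?thesis
        by simp
    qed
    with steps total balanced show "motzkin (length cs) (steps_of_sets A B cs)"
      by (simp add: motzkin_def)
  qed
qed

lemma flat0_steps_of_sets:
  assumes sorted: "sorted_wrt (<) cs" and cover: "A \<union> B = set cs"
  shows "flat0 (steps_of_sets A B cs) = card (rank_matches A B)"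
proof -
  have distinct: "distinct cs"
    using sorted by (simp add: strict_sorted_iff)
  let ?p = "steps_of_sets A B cs"
  have flat_iff: "?p ! t = 0 \<and> sum_list (take t ?p) = 0 \<longleftrightarrow> cs ! t \<in> rank_matches A B"
    if t: "t < length cs" for t
  proof -
    have "cs ! t \<in> A \<union> B"
      using cover t by auto
    with t have "?p ! t = 0 \<longleftrightarrow> cs ! t \<in> A \<inter> B"
      by (auto simp: steps_of_sets_def of_bool_def)
    moreover have "sum_list (take t ?p) =
        int (card {x \<in> B. x < cs ! t}) - int (card {x \<in> A. x < cs ! t})"
      using sum_list_take_steps_of_sets_below[OF distinct cover set_take_sorted[OF sorted t]] .
    ultimately show ?thesis
      by (auto simp: rank_matches_def)
  qed
  let ?T = "{t. t < length ?p \<and> ?p ! t = 0 \<and> sum_list (take t ?p) = 0}"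
  have "(\<lambda>t. cs ! t) ` ?T = rank_matches A B"
  proof (intro equalityI subsetI)
    fix x assume "x \<in> (\<lambda>t. cs ! t) ` ?T"
    with flat_iff show "x \<in> rank_matches A B"
      by auto
  next
    fix x assume x: "x \<in> rank_matches A B"
    then have "x \<in> set cs"
      using cover by (auto simp: rank_matches_def)
    then obtain t where "t < length cs" "x = cs ! t"
      by (auto simp: in_set_conv_nth)
    with x flat_iff show "x \<in> (\<lambda>t. cs ! t) ` ?T"
      by auto
  qed
  moreover have "inj_on (\<lambda>t. cs ! t) ?T"
    using distinct by (auto simp: inj_on_def nth_eq_iff_index_eq)
  ultimately show ?thesis
    unfolding flat0_def using card_image by fastforce
qed

lemma steps_of_sets_inj:
  assumes "distinct cs" "A \<union> B = set cs" "A' \<union> B' = set cs"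
    and "steps_of_sets A B cs = steps_of_sets A' B' cs"
  shows "A = A' \<and> B = B'"
proof -
  have "(c \<in> A \<longleftrightarrow> c \<in> A') \<and> (c \<in> B \<longleftrightarrow> c \<in> B')" if "c \<in> set cs" for c
  proof -
    obtain t where t: "t < length cs" "c = cs ! t"
      using \<open>c \<in> set cs\<close> by (auto simp: in_set_conv_nth)
    have "steps_of_sets A B cs ! t = steps_of_sets A' B' cs ! t"
      using assms(4) by simp
    with t have "of_bool (c \<in> B) - of_bool (c \<in> A) = (of_bool (c \<in> B') - of_bool (c \<in> A') :: int)"
      by (simp add: steps_of_sets_def)
    with that assms(2,3) show ?thesis
      by (auto simp: of_bool_def split: if_splits)
  qed
  with assms(2,3) show ?thesis
    by blast
qed

lemma ex_steps_of_sets: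
  assumes "distinct cs" "length p = length cs" "set p \<subseteq> {1, -1, 0}"
  shows "\<exists>A B. A \<union> B = set cs \<and> steps_of_sets A B cs = p"
proof (intro exI conjI)
  let ?A = "{cs ! t | t. t < length cs \<and> p ! t \<le> 0}"
    and ?B = "{cs ! t | t. t < length cs \<and> p ! t \<ge> 0}"
  have mem: "cs ! t \<in> ?A \<longleftrightarrow> p ! t \<le> 0" "cs ! t \<in> ?B \<longleftrightarrow> p ! t \<ge> 0"
    if "t < length cs" for t
    using assms(1) that by (auto simp: nth_eq_iff_index_eq)
  have step: "p ! t \<in> {1, -1, 0}" if "t < length cs" for t
    using assms(2) that by (intro subsetD[OF assms(3)] nth_mem) simp
  show "steps_of_sets ?A ?B cs = p"
  proof (rule nth_equalityI)
    fix t assume "t < length (steps_of_sets ?A ?B cs)"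
    then have "t < length cs"
      by simp
    with mem[OF this] step[OF this] show "steps_of_sets ?A ?B cs ! t = p ! t"
      by (auto simp: steps_of_sets_def)
  qed (simp add: assms(2))
  show "?A \<union> ?B = set cs"
  proof
    show "set cs \<subseteq> ?A \<union> ?B"
    proof
      fix x assume "x \<in> set cs"
      then obtain t where "t < length cs" "x = cs ! t"
        by (auto simp: in_set_conv_nth)
      with mem[of t] show "x \<in> ?A \<union> ?B"
        by (simp only: Un_iff) linarith
    qed
  qed auto
qed

lemma bij_betw_steps_of_sets:
  fixes cs :: "'a::linorder list"
  assumes sorted: "sorted_wrt (<) cs"
  shows "bij_betw (\<lambda>(A, B). steps_of_sets A B cs)
    {(A, B). A \<union> B = set cs \<and> card A = card B \<and> ballot_sets A B} {p. motzkin (length cs) p}"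
proof (rule bij_betw_imageI)
  have distinct: "distinct cs"
    using sorted by (simp add: strict_sorted_iff)
  then show "inj_on (\<lambda>(A, B). steps_of_sets A B cs)
      {(A, B). A \<union> B = set cs \<and> card A = card B \<and> ballot_sets A B}"
    by (auto simp: inj_on_def dest: steps_of_sets_inj)
  show "(\<lambda>(A, B). steps_of_sets A B cs) `
      {(A, B). A \<union> B = set cs \<and> card A = card B \<and> ballot_sets A B} = {p. motzkin (length cs) p}"
  proof (intro equalityI subsetI)
    fix p assume "p \<in> (\<lambda>(A, B). steps_of_sets A B cs) `
      {(A, B). A \<union> B = set cs \<and> card A = card B \<and> ballot_sets A B}"
    then show "p \<in> {p. motzkin (length cs) p}"
      using motzkin_steps_of_sets_iff[OF sorted] by auto
  next
    fix p assume p: "p \<in> {p. motzkin (length cs) p}"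
    then have "\<exists>A B. A \<union> B = set cs \<and> steps_of_sets A B cs = p"
      using ex_steps_of_sets[OF distinct] by (simp add: motzkin_def)
    then obtain A B where "A \<union> B = set cs" "steps_of_sets A B cs = p"
      by blast
    with p show "p \<in> (\<lambda>(A, B). steps_of_sets A B cs) `
      {(A, B). A \<union> B = set cs \<and> card A = card B \<and> ballot_sets A B}"
      using motzkin_steps_of_sets_iff[OF sorted] by (auto intro!: image_eqI[of _ _ "(A, B)"])
  qed
qed

lemma bij_betw_steps_of_sets_flat0:
  fixes cs :: "'a::linorder list"
  assumes "sorted_wrt (<) cs"
  shows "bij_betw (\<lambda>(A, B). steps_of_sets A B cs)
    {(A, B). A \<union> B = set cs \<and> card A = card B \<and> ballot_sets A B \<and> card (rank_matches A B) = k}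
    {p. motzkin (length cs) p \<and> flat0 p = k}"
proof -
  have "bij_betw (\<lambda>(A, B). steps_of_sets A B cs)
      {AB \<in> {(A, B). A \<union> B = set cs \<and> card A = card B \<and> ballot_sets A B}.
        card (rank_matches (fst AB) (snd AB)) = k}
      {p \<in> {p. motzkin (length cs) p}. flat0 p = k}"
    by (rule bij_betw_Collect[OF bij_betw_steps_of_sets[OF assms]])
      (auto simp: flat0_steps_of_sets[OF assms])
  moreover have "{AB \<in> {(A, B). A \<union> B = set cs \<and> card A = card B \<and> ballot_sets A B}.
        card (rank_matches (fst AB) (snd AB)) = k} =
      {(A, B). A \<union> B = set cs \<and> card A = card B \<and> ballot_sets A B \<and> card (rank_matches A B) = k}"
    by auto
  ultimately show ?thesis
    by simp
qed

lemma bij_betw_run_ends_free_comp_hits: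
  assumes "0 < n" "is_composition X n" "2 \<le> l"
  shows "bij_betw (\<lambda>w. (run_ends 0 n w, run_ends 1 n w))
    {w. dyck n w \<and> free_comp n w = X \<and> hits n w = l}
    {(A, B). A \<union> B = set (butlast (psums X)) \<and> card A = card B \<and> ballot_sets A B \<and>
      card (rank_matches A B) = l - 2}"
proof -
  let ?ends = "\<lambda>w. (run_ends 0 n w, run_ends 1 n w)"
  let ?P = "\<lambda>(A, B). A \<union> B = set (butlast (psums X)) \<and> card (rank_matches A B) = l - 2"
  have "bij_betw ?ends {w \<in> {w. dyck n w}. free_comp n w = X \<and> hits n w = l}
      {AB \<in> ballot_pairs n. ?P AB}"
    by (rule bij_betw_Collect[OF bij_betw_run_ends[OF assms(1)]])
      (use free_comp_eq_iff[OF assms(2,1)] hits_eq_card_rank_matches[OF _ assms(1)] assms(3) in auto)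
  moreover have "set (butlast (psums X)) \<subseteq> {0<..<n}"
    using assms(1,2) positive_psums_snoc(2)[of X n] by (auto simp: is_composition_def sorted_wrt_append)
  then have "{AB \<in> ballot_pairs n. ?P AB} =
      {(A, B). A \<union> B = set (butlast (psums X)) \<and> card A = card B \<and> ballot_sets A B \<and>
        card (rank_matches A B) = l - 2}"
    by (auto simp: ballot_pairs_def)
  ultimately show ?thesis
    by simp
qed

theorem lemma4p5:
  fixes X :: "nat list" and n l :: nat
  assumes "0 < n" and "is_composition X n" and "2 \<le> l"
  shows "\<exists>f. bij_betw f {w. dyck n w \<and> free_comp n w = X \<and> hits n w = l}
                       {p. motzkin (length X - 1) p \<and> flat0 p = l - 2}"
proof -
  have "sorted_wrt (<) (0 # butlast (psums X) @ [n])"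
    using assms(1,2) positive_psums_snoc(2)[of X n] by (simp add: is_composition_def)
  then have "sorted_wrt (<) (butlast (psums X))"
    by (simp add: sorted_wrt_append)
  from bij_betw_trans[OF bij_betw_run_ends_free_comp_hits[OF assms]
      bij_betw_steps_of_sets_flat0[OF this, of "l - 2"]]
  show ?thesis
    by auto
qed

end
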